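(* Let $\Theta$ be a compact subset of $(0,1/2)\times(\mathbb{R}^2\setminus\Delta)$, $\Delta=\{(x,x):x\in\mathbb{R}\}$. Let $W$ be the cumulative distribution function of a probability measure on $\mathbb{R}$, absolutely continuous with respect to Lebesgue measure, with $\int(1+|u|+u^2+|u|^3)dW(u)<\infty$. Let $g(x)=p_0f(x-\alpha_0)+(1-p_0)f(x-\beta_0)$ with $(p_0,\alpha_0,\beta_0)\in\Theta$ and $f$ a probability density on $\mathbb{R}$, let $X_1,\dots,X_n$ be real numbers ($n\ge2$) and $h>0$. For $\theta=(p,\alpha,\beta)\in\Theta$, $u\in\mathbb{R}$, let $M(\theta,u)=pe^{iu\alpha}+(1-p)e^{iu\beta}$, $$Z_k(\theta,u)=\frac{e^{iuX_k}}{M(\theta,u)}-\frac{e^{-iuX_k}}{M(\theta,-u)},\qquad J(\theta,u)=\frac{g^*(u)}{M(\theta,u)}-\frac{g^*(-u)}{M(\theta,-u)},$$ $$S(\theta)=-\frac14\int_{\mathbb{R}}J^2(\theta,u)\,dW(u),\qquad S_n(\theta)=\frac{-1}{4n(n-1)}\sum_{j\ne k,\ j,k=1}^n\int_{|u|\le1/h}Z_k(\theta,u)Z_j(\theta,u)\,dW(u).$$ Then: (i) $S$ is Lipschitz over $\Theta$; (ii) $S_n$ is Lipschitz over $\Theta$; (iii) the Hessian $\ddot S_n$ of $S_n$ with respect to $\theta$ is Lipschitz over $\Theta$.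
   Context: $g^*(u)=\int e^{ixu}g(x)\,dx$ denotes the Fourier transform. *)

theory Defs
  imports "HOL-Probability.Probability"
begin

type_synonym param = "real \<times> real \<times> real"

definition M :: "param \<Rightarrow> real \<Rightarrow> complex" where
  "M \<theta> u = (case \<theta> of (p, a, b) \<Rightarrow>
      of_real p * exp (\<i> * of_real (u * a)) + of_real (1 - p) * exp (\<i> * of_real (u * b)))"

definition mixdens :: "(real \<Rightarrow> real) \<Rightarrow> param \<Rightarrow> real \<Rightarrow> real" where
  "mixdens f \<theta>0 x = (case \<theta>0 of (p0, a0, b0) \<Rightarrow> p0 * f (x - a0) + (1 - p0) * f (x - b0))"

definition fourier :: "(real \<Rightarrow> real) \<Rightarrow> real \<Rightarrow> complex" where
  "fourier g u = (LINT x|lborel. exp (\<i> * of_real (x * u)) * of_real (g x))"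

definition Zk :: "real \<Rightarrow> param \<Rightarrow> real \<Rightarrow> complex" where
  "Zk x \<theta> u = exp (\<i> * of_real (u * x)) / M \<theta> u - exp (- \<i> * of_real (u * x)) / M \<theta> (- u)"

definition J :: "(real \<Rightarrow> real) \<Rightarrow> param \<Rightarrow> param \<Rightarrow> real \<Rightarrow> complex" where
  "J f \<theta>0 \<theta> u = fourier (mixdens f \<theta>0) u / M \<theta> u - fourier (mixdens f \<theta>0) (- u) / M \<theta> (- u)"

definition S :: "real measure \<Rightarrow> (real \<Rightarrow> real) \<Rightarrow> param \<Rightarrow> param \<Rightarrow> complex" where
  "S W f \<theta>0 \<theta> = - (1/4) * (LINT u|W. (J f \<theta>0 \<theta> u)^2)"

definition Sn :: "real measure \<Rightarrow> (nat \<Rightarrow> real) \<Rightarrow> nat \<Rightarrow> real \<Rightarrow> param \<Rightarrow> complex" where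
  "Sn W X n h \<theta> = of_real (- 1 / (4 * real n * (real n - 1))) *
     (\<Sum>(j, k) \<in> {(j, k). j \<in> {1..n} \<and> k \<in> {1..n} \<and> j \<noteq> k}.
        (LINT u:{u. \<bar>u\<bar> \<le> 1 / h}|W. Zk (X k) \<theta> u * Zk (X j) \<theta> u))"

end

theory Submission
  imports Defs
begin

text \<open>Since \<open>|M \<theta> u| \<ge> 1 - 2p\<close> is bounded away from zero on \<open>\<Theta>\<close>, \<open>J\<close> is bounded and Lipschitz in
  \<open>\<theta>\<close> with a constant growing linearly in \<open>|u|\<close>; integrating against \<open>W\<close>, which has a first moment,
  gives (i). Each integrand of \<open>S\<^sub>n\<close> is smooth in \<open>\<theta>\<close> with all partial derivatives jointly
  continuous in \<open>(\<theta>, u)\<close>, and \<open>u\<close> ranges over the compact interval \<open>|u| \<le> 1/h\<close>. Differentiation under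
  the integral sign preserves this, so \<open>S\<^sub>n\<close> is \<open>C\<^sup>3\<close> on \<open>p < 1/2\<close>. A \<open>C\<^sup>1\<close> map is Lipschitz on
  compact sets; applied to \<open>S\<^sub>n\<close> and to its Hessian this gives (ii) and (iii).\<close>

section \<open>Families of functions smooth in the parameter\<close>

definition blinfun_of_partials :: "'b::real_normed_vector \<Rightarrow> 'b \<Rightarrow> 'b \<Rightarrow> param \<Rightarrow>\<^sub>L 'b" where
  "blinfun_of_partials x y z = Blinfun (\<lambda>d. fst d *\<^sub>R x + fst (snd d) *\<^sub>R y + snd (snd d) *\<^sub>R z)"

lemma blinfun_apply_blinfun_of_partials [simp]:
  "blinfun_apply (blinfun_of_partials x y z) = (\<lambda>d. fst d *\<^sub>R x + fst (snd d) *\<^sub>R y + snd (snd d) *\<^sub>R z)"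
proof -
  have "bounded_linear (\<lambda>d::param. fst d *\<^sub>R x + fst (snd d) *\<^sub>R y + snd (snd d) *\<^sub>R z)"
    by (intro bounded_linear_add bounded_linear_compose[OF bounded_linear_scaleR_left]
        bounded_linear_fst bounded_linear_compose[OF bounded_linear_fst bounded_linear_snd]
        bounded_linear_compose[OF bounded_linear_snd bounded_linear_snd])
  then show ?thesis by (simp add: blinfun_of_partials_def bounded_linear_Blinfun_apply)
qed

lemma norm_triple_components_le:
  fixes v :: "'a::real_normed_vector \<times> 'b::real_normed_vector \<times> 'c::real_normed_vector"
  shows "norm (fst v) \<le> norm v" "norm (fst (snd v)) \<le> norm v" "norm (snd (snd v)) \<le> norm v"
  by (metis norm_fst_le prod.collapse, metis norm_fst_le norm_snd_le order_trans prod.collapse,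
      metis norm_snd_le order_trans prod.collapse)

lemma norm_blinfun_of_partials: "norm (blinfun_of_partials x y z) \<le> norm x + norm y + norm z"
proof (rule norm_blinfun_bound)
  fix d :: param
  have "norm (blinfun_of_partials x y z d) \<le> \<bar>fst d\<bar> * norm x + \<bar>fst (snd d)\<bar> * norm y + \<bar>snd (snd d)\<bar> * norm z"
    by (auto intro!: order_trans[OF norm_triangle_ineq] add_mono)
  also have "\<dots> \<le> norm d * norm x + norm d * norm y + norm d * norm z"
    using norm_triple_components_le[of d] by (intro add_mono mult_right_mono) auto
  finally show "norm (blinfun_of_partials x y z d) \<le> (norm x + norm y + norm z) * norm d"
    by (simp add: algebra_simps)
qed simp

lemma bounded_linear_blinfun_of_partials:
  "bounded_linear (\<lambda>v. blinfun_of_partials (fst v) (fst (snd v)) (snd (snd v)))"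
proof (rule bounded_linear_intro[where K=3])
  fix v :: "'b::real_normed_vector \<times> 'b \<times> 'b"
  show "norm (blinfun_of_partials (fst v) (fst (snd v)) (snd (snd v))) \<le> norm v * 3"
    using norm_blinfun_of_partials[of "fst v" "fst (snd v)" "snd (snd v)"] norm_triple_components_le[of v]
    by linarith
qed (auto intro!: blinfun_eqI simp: algebra_simps plus_blinfun.rep_eq scaleR_blinfun.rep_eq)

abbreviation has_partials_at :: "(param \<Rightarrow> 'b::real_normed_vector) \<Rightarrow> 'b \<Rightarrow> 'b \<Rightarrow> 'b \<Rightarrow> param \<Rightarrow> bool" where
  "has_partials_at f x y z \<theta> \<equiv> (f has_derivative blinfun_apply (blinfun_of_partials x y z)) (at \<theta>)"

text \<open>\<open>Ck_param k U A F\<close>: \<open>\<theta> \<mapsto> F \<theta> u\<close> is \<open>k\<close> times differentiable on \<open>U\<close>, and all its partial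
  derivatives of order at most \<open>k\<close> with respect to the three coordinates of \<open>\<theta>\<close> are jointly
  continuous on \<open>U \<times> A\<close>.\<close>
primrec Ck_param ::
    "nat \<Rightarrow> param set \<Rightarrow> 'u::topological_space set \<Rightarrow> (param \<Rightarrow> 'u \<Rightarrow> 'b::real_normed_vector) \<Rightarrow> bool"
where
  "Ck_param 0 U A F = continuous_on (U \<times> A) (\<lambda>(\<theta>, u). F \<theta> u)"
| "Ck_param (Suc k) U A F = (continuous_on (U \<times> A) (\<lambda>(\<theta>, u). F \<theta> u) \<and>
     (\<exists>Fp Fa Fb. (\<forall>\<theta>\<in>U. \<forall>u\<in>A. has_partials_at (\<lambda>\<theta>. F \<theta> u) (Fp \<theta> u) (Fa \<theta> u) (Fb \<theta> u) \<theta>)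
      \<and> Ck_param k U A Fp \<and> Ck_param k U A Fa \<and> Ck_param k U A Fb))"

lemma Ck_param_SucE:
  assumes "Ck_param (Suc k) U A F"
  obtains Fp Fa Fb where "continuous_on (U \<times> A) (\<lambda>(\<theta>, u). F \<theta> u)"
    "\<And>\<theta> u. \<theta> \<in> U \<Longrightarrow> u \<in> A \<Longrightarrow> has_partials_at (\<lambda>\<theta>. F \<theta> u) (Fp \<theta> u) (Fa \<theta> u) (Fb \<theta> u) \<theta>"
    "Ck_param k U A Fp" "Ck_param k U A Fa" "Ck_param k U A Fb"
  using assms unfolding Ck_param.simps by blast

lemma Ck_param_SucI:
  assumes "continuous_on (U \<times> A) (\<lambda>(\<theta>, u). F \<theta> u)"
    "\<And>\<theta> u. \<theta> \<in> U \<Longrightarrow> u \<in> A \<Longrightarrow> has_partials_at (\<lambda>\<theta>. F \<theta> u) (Fp \<theta> u) (Fa \<theta> u) (Fb \<theta> u) \<theta>"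
    "Ck_param k U A Fp" "Ck_param k U A Fa" "Ck_param k U A Fb"
  shows "Ck_param (Suc k) U A F"
  using assms unfolding Ck_param.simps by blast

lemma Ck_param_continuous_on: "Ck_param k U A F \<Longrightarrow> continuous_on (U \<times> A) (\<lambda>(\<theta>, u). F \<theta> u)"
  by (cases k) auto

lemma Ck_param_SucD: "Ck_param (Suc k) U A F \<Longrightarrow> Ck_param k U A F"
proof (induction k arbitrary: F)
  case 0
  then show ?case by (simp add: Ck_param_continuous_on)
next
  case (Suc k)
  obtain Fp Fa Fb where c: "continuous_on (U \<times> A) (\<lambda>(\<theta>, u). F \<theta> u)"
    and d: "\<And>\<theta> u. \<theta> \<in> U \<Longrightarrow> u \<in> A \<Longrightarrow> has_partials_at (\<lambda>\<theta>. F \<theta> u) (Fp \<theta> u) (Fa \<theta> u) (Fb \<theta> u) \<theta>"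
    and "Ck_param (Suc k) U A Fp" "Ck_param (Suc k) U A Fa" "Ck_param (Suc k) U A Fb"
    using Ck_param_SucE[OF Suc.prems] by metis
  then show ?case by (intro Ck_param_SucI[OF c d] Suc.IH)
qed

lemma Ck_param_const:
  fixes c :: "'u::topological_space \<Rightarrow> 'b::real_normed_vector"
  shows "continuous_on A c \<Longrightarrow> Ck_param k U A (\<lambda>\<theta> u. c u)"
proof (induction k arbitrary: c)
  case 0
  then show ?case
    by (auto intro!: continuous_on_compose2[OF 0] continuous_intros simp: split_beta)
next
  case (Suc k)
  have "continuous_on (U \<times> A) (\<lambda>(\<theta>, u). c u)"
    using Suc.IH[OF Suc.prems] by (rule Ck_param_continuous_on)
  moreover have "Ck_param k U A (\<lambda>\<theta> u. 0::'b)"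
    using Suc.IH[of "\<lambda>_. 0"] by simp
  ultimately show ?case
    by (intro Ck_param_SucI[where Fp="\<lambda>\<theta> u. 0" and Fa="\<lambda>\<theta> u. 0" and Fb="\<lambda>\<theta> u. 0"]) auto
qed

lemma Ck_param_bounded_linear:
  assumes L: "bounded_linear L"
  shows "Ck_param k U A F \<Longrightarrow> Ck_param k U A (\<lambda>\<theta> u. L (F \<theta> u))"
proof (induction k arbitrary: F)
  case 0
  then show ?case
    using bounded_linear.continuous_on[OF L Ck_param_continuous_on[OF 0]] by (simp add: split_beta)
next
  case (Suc k)
  obtain Fp Fa Fb where
    d: "\<And>\<theta> u. \<theta> \<in> U \<Longrightarrow> u \<in> A \<Longrightarrow> has_partials_at (\<lambda>\<theta>. F \<theta> u) (Fp \<theta> u) (Fa \<theta> u) (Fb \<theta> u) \<theta>"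
    and Fk: "Ck_param k U A Fp" "Ck_param k U A Fa" "Ck_param k U A Fb"
    using Ck_param_SucE[OF Suc.prems] by metis
  have c: "continuous_on (U \<times> A) (\<lambda>(\<theta>, u). L (F \<theta> u))"
    using bounded_linear.continuous_on[OF L Ck_param_continuous_on[OF Suc.prems]] by (simp add: split_beta)
  have "has_partials_at (\<lambda>\<theta>. L (F \<theta> u)) (L (Fp \<theta> u)) (L (Fa \<theta> u)) (L (Fb \<theta> u)) \<theta>"
    if "\<theta> \<in> U" "u \<in> A" for \<theta> u
    using bounded_linear.has_derivative[OF L d[OF that]]
    by (simp add: linear_add[OF bounded_linear.linear[OF L]] linear_scale[OF bounded_linear.linear[OF L]])
  from Ck_param_SucI[OF c this Suc.IH[OF Fk(1)] Suc.IH[OF Fk(2)] Suc.IH[OF Fk(3)]] show ?case .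
qed

lemma Ck_param_Pair:
  "Ck_param k U A F \<Longrightarrow> Ck_param k U A G \<Longrightarrow> Ck_param k U A (\<lambda>\<theta> u. (F \<theta> u, G \<theta> u))"
proof (induction k arbitrary: F G)
  case 0
  then show ?case
    using continuous_on_Pair[OF Ck_param_continuous_on[OF 0(1)] Ck_param_continuous_on[OF 0(2)]]
    by (simp add: split_beta)
next
  case (Suc k)
  obtain Fp Fa Fb where
    F: "\<And>\<theta> u. \<theta> \<in> U \<Longrightarrow> u \<in> A \<Longrightarrow> has_partials_at (\<lambda>\<theta>. F \<theta> u) (Fp \<theta> u) (Fa \<theta> u) (Fb \<theta> u) \<theta>"
    and Fk: "Ck_param k U A Fp" "Ck_param k U A Fa" "Ck_param k U A Fb"
    using Ck_param_SucE[OF Suc.prems(1)] by metis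
  obtain Gp Ga Gb where
    G: "\<And>\<theta> u. \<theta> \<in> U \<Longrightarrow> u \<in> A \<Longrightarrow> has_partials_at (\<lambda>\<theta>. G \<theta> u) (Gp \<theta> u) (Ga \<theta> u) (Gb \<theta> u) \<theta>"
    and Gk: "Ck_param k U A Gp" "Ck_param k U A Ga" "Ck_param k U A Gb"
    using Ck_param_SucE[OF Suc.prems(2)] by metis
  have c: "continuous_on (U \<times> A) (\<lambda>(\<theta>, u). (F \<theta> u, G \<theta> u))"
    using continuous_on_Pair[OF Ck_param_continuous_on[OF Suc.prems(1)] Ck_param_continuous_on[OF Suc.prems(2)]]
    by (simp add: split_beta)
  have d: "has_partials_at (\<lambda>\<theta>. (F \<theta> u, G \<theta> u))
      (Fp \<theta> u, Gp \<theta> u) (Fa \<theta> u, Ga \<theta> u) (Fb \<theta> u, Gb \<theta> u) \<theta>"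
    if "\<theta> \<in> U" "u \<in> A" for \<theta> u
    using has_derivative_Pair[OF F[OF that] G[OF that]] by simp
  show ?case
    by (rule Ck_param_SucI[OF c d Suc.IH[OF Fk(1) Gk(1)] Suc.IH[OF Fk(2) Gk(2)] Suc.IH[OF Fk(3) Gk(3)]])
qed

lemma Ck_param_add:
  "Ck_param k U A F \<Longrightarrow> Ck_param k U A G \<Longrightarrow> Ck_param k U A (\<lambda>\<theta> u. F \<theta> u + G \<theta> u)"
  using Ck_param_bounded_linear[OF bounded_linear_add[OF bounded_linear_fst bounded_linear_snd] Ck_param_Pair]
  by simp

lemma Ck_param_bounded_bilinear:
  assumes B: "bounded_bilinear B"
  shows "Ck_param k U A F \<Longrightarrow> Ck_param k U A G \<Longrightarrow> Ck_param k U A (\<lambda>\<theta> u. B (F \<theta> u) (G \<theta> u))"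
proof (induction k arbitrary: F G)
  case 0
  then show ?case
    using bounded_bilinear.continuous_on[OF B Ck_param_continuous_on[OF 0(1)] Ck_param_continuous_on[OF 0(2)]]
    by (simp add: split_beta)
next
  case (Suc k)
  obtain Fp Fa Fb where
    F: "\<And>\<theta> u. \<theta> \<in> U \<Longrightarrow> u \<in> A \<Longrightarrow> has_partials_at (\<lambda>\<theta>. F \<theta> u) (Fp \<theta> u) (Fa \<theta> u) (Fb \<theta> u) \<theta>"
    and Fk: "Ck_param k U A Fp" "Ck_param k U A Fa" "Ck_param k U A Fb"
    using Ck_param_SucE[OF Suc.prems(1)] by metis
  obtain Gp Ga Gb where
    G: "\<And>\<theta> u. \<theta> \<in> U \<Longrightarrow> u \<in> A \<Longrightarrow> has_partials_at (\<lambda>\<theta>. G \<theta> u) (Gp \<theta> u) (Ga \<theta> u) (Gb \<theta> u) \<theta>"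
    and Gk: "Ck_param k U A Gp" "Ck_param k U A Ga" "Ck_param k U A Gb"
    using Ck_param_SucE[OF Suc.prems(2)] by metis
  have c: "continuous_on (U \<times> A) (\<lambda>(\<theta>, u). B (F \<theta> u) (G \<theta> u))"
    using Suc.IH[OF Ck_param_SucD[OF Suc.prems(1)] Ck_param_SucD[OF Suc.prems(2)]]
    by (rule Ck_param_continuous_on)
  have d: "has_partials_at (\<lambda>\<theta>. B (F \<theta> u) (G \<theta> u))
      (B (F \<theta> u) (Gp \<theta> u) + B (Fp \<theta> u) (G \<theta> u))
      (B (F \<theta> u) (Ga \<theta> u) + B (Fa \<theta> u) (G \<theta> u))
      (B (F \<theta> u) (Gb \<theta> u) + B (Fb \<theta> u) (G \<theta> u)) \<theta>"
    if "\<theta> \<in> U" "u \<in> A" for \<theta> u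
    using bounded_bilinear.FDERIV[OF B F[OF that] G[OF that]]
    by (simp add: bounded_bilinear.add_left[OF B] bounded_bilinear.add_right[OF B]
        bounded_bilinear.scaleR_left[OF B] bounded_bilinear.scaleR_right[OF B] algebra_simps)
  have product_rule: "Ck_param k U A (\<lambda>\<theta> u. B (F \<theta> u) (G' \<theta> u) + B (F' \<theta> u) (G \<theta> u))"
    if "Ck_param k U A F'" "Ck_param k U A G'" for F' G'
    using Suc.IH[OF Ck_param_SucD[OF Suc.prems(1)] that(2)] Suc.IH[OF that(1) Ck_param_SucD[OF Suc.prems(2)]]
    by (rule Ck_param_add)
  show ?case
    by (rule Ck_param_SucI[OF c d product_rule product_rule product_rule]) (use Fk Gk in auto)
qed

lemma Ck_param_mult:
  fixes F G :: "param \<Rightarrow> 'u::topological_space \<Rightarrow> 'b::real_normed_algebra"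
  shows "Ck_param k U A F \<Longrightarrow> Ck_param k U A G \<Longrightarrow> Ck_param k U A (\<lambda>\<theta> u. F \<theta> u * G \<theta> u)"
  by (rule Ck_param_bounded_bilinear[OF bounded_bilinear_mult])

lemma Ck_param_cmult:
  fixes F :: "param \<Rightarrow> 'u::topological_space \<Rightarrow> 'b::real_normed_algebra"
  shows "Ck_param k U A F \<Longrightarrow> Ck_param k U A (\<lambda>\<theta> u. c * F \<theta> u)"
  by (rule Ck_param_bounded_linear[OF bounded_linear_mult_right])

lemma Ck_param_uminus: "Ck_param k U A F \<Longrightarrow> Ck_param k U A (\<lambda>\<theta> u. - F \<theta> u)"
  by (rule Ck_param_bounded_linear[OF bounded_linear_minus[OF bounded_linear_ident]])

lemma Ck_param_diff:
  "Ck_param k U A F \<Longrightarrow> Ck_param k U A G \<Longrightarrow> Ck_param k U A (\<lambda>\<theta> u. F \<theta> u - G \<theta> u)"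
  using Ck_param_add[OF _ Ck_param_uminus, of k U A F G] by simp

lemma Ck_param_sum:
  fixes F :: "'i \<Rightarrow> param \<Rightarrow> 'u::topological_space \<Rightarrow> 'b::real_normed_vector"
  shows "finite I \<Longrightarrow> (\<And>i. i \<in> I \<Longrightarrow> Ck_param k U A (F i)) \<Longrightarrow> Ck_param k U A (\<lambda>\<theta> u. \<Sum>i\<in>I. F i \<theta> u)"
proof (induction I rule: finite_induct)
  case empty
  then show ?case using Ck_param_const[of A "\<lambda>_. 0::'b"] by simp
next
  case (insert i I)
  then show ?case by (simp add: Ck_param_add)
qed

lemma Ck_param_id: "Ck_param k U A (\<lambda>\<theta> u. \<theta>)"
proof (cases k)
  case 0
  then show ?thesis by (simp add: split_beta continuous_intros)
next
  case (Suc k')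
  have "has_partials_at (\<lambda>\<theta>. \<theta>) (1, 0, 0) (0, 1, 0) (0, 0, 1) \<theta>"
    for \<theta> :: param
    by (rule has_derivative_eq_rhs[OF has_derivative_ident]) auto
  then show ?thesis
    unfolding Suc
    by (intro Ck_param_SucI[where Fp="\<lambda>_ _. (1, 0, 0)" and Fa="\<lambda>_ _. (0, 1, 0)" and Fb="\<lambda>_ _. (0, 0, 1)"]
        Ck_param_const) (auto simp: split_beta continuous_intros)
qed

lemma Ck_param_inverse:
  fixes F :: "param \<Rightarrow> 'u::topological_space \<Rightarrow> 'b::real_normed_div_algebra"
  assumes nz: "\<And>\<theta> u. \<theta> \<in> U \<Longrightarrow> u \<in> A \<Longrightarrow> F \<theta> u \<noteq> 0"
  shows "Ck_param k U A F \<Longrightarrow> Ck_param k U A (\<lambda>\<theta> u. inverse (F \<theta> u))"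
proof (induction k)
  case 0
  then show ?case
    using continuous_on_inverse[OF Ck_param_continuous_on[OF 0]] nz by (simp add: split_beta)
next
  case (Suc k)
  obtain Fp Fa Fb where
    F: "\<And>\<theta> u. \<theta> \<in> U \<Longrightarrow> u \<in> A \<Longrightarrow> has_partials_at (\<lambda>\<theta>. F \<theta> u) (Fp \<theta> u) (Fa \<theta> u) (Fb \<theta> u) \<theta>"
    and Fk: "Ck_param k U A Fp" "Ck_param k U A Fa" "Ck_param k U A Fb"
    using Ck_param_SucE[OF Suc.prems] by metis
  have inv: "Ck_param k U A (\<lambda>\<theta> u. inverse (F \<theta> u))"
    using Suc.IH[OF Ck_param_SucD[OF Suc.prems]] .
  have d: "has_partials_at (\<lambda>\<theta>. inverse (F \<theta> u))
      (- (inverse (F \<theta> u) * Fp \<theta> u * inverse (F \<theta> u)))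
      (- (inverse (F \<theta> u) * Fa \<theta> u * inverse (F \<theta> u)))
      (- (inverse (F \<theta> u) * Fb \<theta> u * inverse (F \<theta> u))) \<theta>"
    if "\<theta> \<in> U" "u \<in> A" for \<theta> u
    using Deriv.has_derivative_inverse[OF nz[OF that] F[OF that]]
    by (rule has_derivative_eq_rhs) (simp add: fun_eq_iff algebra_simps)
  have chain_rule: "Ck_param k U A (\<lambda>\<theta> u. - (inverse (F \<theta> u) * F' \<theta> u * inverse (F \<theta> u)))"
    if "Ck_param k U A F'" for F'
    by (intro Ck_param_uminus Ck_param_mult inv that)
  show ?case
    by (rule Ck_param_SucI[OF Ck_param_continuous_on[OF inv] d chain_rule chain_rule chain_rule])
      (use Fk in auto)
qed

lemma Ck_param_exp:
  fixes F :: "param \<Rightarrow> 'u::topological_space \<Rightarrow> 'b::{banach, real_normed_field}"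
  shows "Ck_param k U A F \<Longrightarrow> Ck_param k U A (\<lambda>\<theta> u. exp (F \<theta> u))"
proof (induction k)
  case 0
  then show ?case
    using continuous_on_exp[OF Ck_param_continuous_on[OF 0]] by (simp add: split_beta)
next
  case (Suc k)
  obtain Fp Fa Fb where
    F: "\<And>\<theta> u. \<theta> \<in> U \<Longrightarrow> u \<in> A \<Longrightarrow> has_partials_at (\<lambda>\<theta>. F \<theta> u) (Fp \<theta> u) (Fa \<theta> u) (Fb \<theta> u) \<theta>"
    and Fk: "Ck_param k U A Fp" "Ck_param k U A Fa" "Ck_param k U A Fb"
    using Ck_param_SucE[OF Suc.prems] by metis
  have e: "Ck_param k U A (\<lambda>\<theta> u. exp (F \<theta> u))"
    using Suc.IH[OF Ck_param_SucD[OF Suc.prems]] .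
  have d: "has_partials_at (\<lambda>\<theta>. exp (F \<theta> u))
      (exp (F \<theta> u) * Fp \<theta> u) (exp (F \<theta> u) * Fa \<theta> u) (exp (F \<theta> u) * Fb \<theta> u) \<theta>"
    if "\<theta> \<in> U" "u \<in> A" for \<theta> u
    using has_derivative_compose[OF F[OF that] DERIV_exp[unfolded has_field_derivative_def]]
    by (simp add: algebra_simps)
  show ?case
    by (rule Ck_param_SucI[OF Ck_param_continuous_on[OF e] d Ck_param_mult[OF e] Ck_param_mult[OF e]
        Ck_param_mult[OF e]]) (use Fk in auto)
qed

lemma Ck_param_blinfun_of_partials:
  "Ck_param k U A F \<Longrightarrow> Ck_param k U A G \<Longrightarrow> Ck_param k U A H \<Longrightarrow>
    Ck_param k U A (\<lambda>\<theta> u. blinfun_of_partials (F \<theta> u) (G \<theta> u) (H \<theta> u))"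
  using Ck_param_bounded_linear[OF bounded_linear_blinfun_of_partials Ck_param_Pair[OF _ Ck_param_Pair]]
  by simp

lemma Ck_param_SucE_derivative:
  assumes "Ck_param (Suc k) U A F"
  obtains F' where
    "\<And>\<theta> u. \<theta> \<in> U \<Longrightarrow> u \<in> A \<Longrightarrow> ((\<lambda>\<theta>. F \<theta> u) has_derivative blinfun_apply (F' \<theta> u)) (at \<theta>)"
    "Ck_param k U A F'"
proof -
  obtain Fp Fa Fb where
    "\<And>\<theta> u. \<theta> \<in> U \<Longrightarrow> u \<in> A \<Longrightarrow> has_partials_at (\<lambda>\<theta>. F \<theta> u) (Fp \<theta> u) (Fa \<theta> u) (Fb \<theta> u) \<theta>"
    and "Ck_param k U A Fp" "Ck_param k U A Fa" "Ck_param k U A Fb"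
    using Ck_param_SucE[OF assms] by metis
  then show thesis
    by (intro that[where F'="\<lambda>\<theta> u. blinfun_of_partials (Fp \<theta> u) (Fa \<theta> u) (Fb \<theta> u)"]
        Ck_param_blinfun_of_partials)
qed

lemma Ck_param_of_real_coordinates:
  "Ck_param k U A (\<lambda>\<theta> u. of_real (fst \<theta>) :: 'b::real_normed_algebra_1)"
  "Ck_param k U A (\<lambda>\<theta> u. of_real (fst (snd \<theta>)) :: 'b)"
  "Ck_param k U A (\<lambda>\<theta> u. of_real (snd (snd \<theta>)) :: 'b)"
  using Ck_param_bounded_linear[OF bounded_linear_compose[OF bounded_linear_of_real] Ck_param_id]
    bounded_linear_fst bounded_linear_compose[OF bounded_linear_fst bounded_linear_snd]
    bounded_linear_compose[OF bounded_linear_snd bounded_linear_snd]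
  by blast+

section \<open>Integrals depending on a parameter\<close>

lemma continuous_on_fixed_fst:
  assumes "continuous_on (U \<times> A) (\<lambda>(\<theta>, u). F \<theta> u)" "\<theta> \<in> U"
  shows "continuous_on A (F \<theta>)"
  using continuous_on_compose2[OF assms(1) continuous_on_Pair[OF continuous_on_const continuous_on_id]] assms(2)
  by auto

lemma continuous_on_fixed_snd:
  assumes "continuous_on (U \<times> A) (\<lambda>(\<theta>, u). F \<theta> u)" "u \<in> A"
  shows "continuous_on U (\<lambda>\<theta>. F \<theta> u)"
  using continuous_on_compose2[OF assms(1) continuous_on_Pair[OF continuous_on_id continuous_on_const]] assms(2)
  by auto

lemma set_integrable_continuous_on_compact:
  fixes g :: "'u::metric_space \<Rightarrow> 'b::{banach, second_countable_topology}"
  assumes W: "finite_measure W" "sets W = sets borel" and A: "compact A" and g: "continuous_on A g"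
  shows "set_integrable W A g"
proof -
  have meas: "(\<lambda>u. indicator A u *\<^sub>R g u) \<in> borel_measurable W"
    using borel_measurable_continuous_on_indicator[OF borel_closed[OF compact_imp_closed[OF A]] g]
    by (simp add: measurable_cong_sets[OF W(2) refl])
  obtain B where "\<And>u. u \<in> A \<Longrightarrow> norm (g u) \<le> B"
    using compact_imp_bounded[OF compact_continuous_image[OF g A]] by (auto simp: bounded_iff)
  then have "AE u in W. norm (indicator A u *\<^sub>R g u) \<le> max 0 B"
    by (intro AE_I2) (force simp: indicator_def le_max_iff_disj)
  then show ?thesis
    unfolding set_integrable_def by (rule finite_measure.integrable_const_bound[OF W(1) _ meas])
qed

lemma norm_set_integral_le_measure:
  fixes g :: "'u \<Rightarrow> 'b::{banach, second_countable_topology}"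
  assumes W: "finite_measure W" and A: "A \<in> sets W" and g: "set_integrable W A g"
    and bound: "\<And>u. u \<in> A \<Longrightarrow> norm (g u) \<le> e"
  shows "norm (LINT u:A|W. g u) \<le> e * measure W A"
proof -
  have fin: "emeasure W A \<noteq> \<infinity>"
    using finite_measure.emeasure_finite[OF W] by simp
  have "set_integrable W A (\<lambda>_. e)"
    unfolding set_integrable_def using integrable_real_indicator[OF A] fin
    by (simp add: integrable_mult_left less_top)
  then have "norm (LINT u:A|W. g u) \<le> (LINT u:A|W. e)"
    using set_integral_norm_bound[OF g] set_integral_mono[OF set_integrable_norm[OF g] _ bound]
    by (meson order_trans)
  then show ?thesis
    using set_integral_const[OF A fin, of e] by (simp add: mult.commute)
qed

lemma uniformly_near_in_param:
  fixes G :: "'a::heine_borel \<Rightarrow> 'u::metric_space \<Rightarrow> 'c::metric_space"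
  assumes c: "continuous_on (U \<times> A) (\<lambda>(\<theta>, u). G \<theta> u)" and U: "open U" and A: "compact A"
    and \<theta>0: "\<theta>0 \<in> U" and e: "e > 0"
  obtains d where "d > 0" "\<And>\<theta>. dist \<theta> \<theta>0 < d \<Longrightarrow> \<theta> \<in> U"
    "\<And>\<theta> u. dist \<theta> \<theta>0 < d \<Longrightarrow> u \<in> A \<Longrightarrow> dist (G \<theta> u) (G \<theta>0 u) < e"
proof -
  obtain r where r: "r > 0" "cball \<theta>0 r \<subseteq> U"
    using U \<theta>0 open_contains_cball by blast
  have "uniformly_continuous_on (cball \<theta>0 r \<times> A) (\<lambda>(\<theta>, u). G \<theta> u)"
    using r by (intro compact_uniformly_continuous continuous_on_subset[OF c] compact_Times A) auto
  then obtain d where d: "d > 0" "\<And>x x'. x \<in> cball \<theta>0 r \<times> A \<Longrightarrow> x' \<in> cball \<theta>0 r \<times> A \<Longrightarrow>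
      dist x' x < d \<Longrightarrow> dist ((\<lambda>(\<theta>, u). G \<theta> u) x') ((\<lambda>(\<theta>, u). G \<theta> u) x) < e"
    unfolding uniformly_continuous_on_def using e by metis
  show thesis
  proof (rule that[of "min d r"])
    show "\<theta> \<in> U" if "dist \<theta> \<theta>0 < min d r" for \<theta>
      using that r by (auto simp: dist_commute)
    show "dist (G \<theta> u) (G \<theta>0 u) < e" if "dist \<theta> \<theta>0 < min d r" "u \<in> A" for \<theta> u
      using d(2)[of "(\<theta>0, u)" "(\<theta>, u)"] that r by (auto simp: dist_Pair_Pair dist_commute)
  qed (use d r in auto)
qed

lemma continuous_on_set_integral_param:
  fixes F :: "'a::heine_borel \<Rightarrow> 'u::metric_space \<Rightarrow> 'b::{banach, second_countable_topology}"
  assumes W: "finite_measure W" "sets W = sets borel" and U: "open U" and A: "compact A"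
    and c: "continuous_on (U \<times> A) (\<lambda>(\<theta>, u). F \<theta> u)"
  shows "continuous_on U (\<lambda>\<theta>. LINT u:A|W. F \<theta> u)"
  unfolding continuous_on_iff
proof (intro ballI allI impI)
  fix \<theta>0 and e :: real
  assume \<theta>0: "\<theta>0 \<in> U" and e: "0 < e"
  have AW: "A \<in> sets W"
    using A W(2) by (simp add: compact_imp_closed borel_closed)
  have int: "set_integrable W A (F \<theta>)" if "\<theta> \<in> U" for \<theta>
    by (rule set_integrable_continuous_on_compact[OF W A continuous_on_fixed_fst[OF c that]])
  define m where "m = measure W A"
  have m: "0 \<le> m"
    by (simp add: m_def)
  obtain d where d: "d > 0" "\<And>\<theta>. dist \<theta> \<theta>0 < d \<Longrightarrow> \<theta> \<in> U"
    "\<And>\<theta> u. dist \<theta> \<theta>0 < d \<Longrightarrow> u \<in> A \<Longrightarrow> dist (F \<theta> u) (F \<theta>0 u) < e / (m + 1)"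
    using uniformly_near_in_param[OF c U A \<theta>0, of "e / (m + 1)"] e m by auto
  have "dist (LINT u:A|W. F \<theta> u) (LINT u:A|W. F \<theta>0 u) < e" if "dist \<theta> \<theta>0 < d" for \<theta>
  proof -
    have "dist (LINT u:A|W. F \<theta> u) (LINT u:A|W. F \<theta>0 u) = norm (LINT u:A|W. F \<theta> u - F \<theta>0 u)"
      using int[OF d(2)[OF that]] int[OF \<theta>0] by (simp add: dist_norm)
    also have "\<dots> \<le> e / (m + 1) * m"
      using int[OF d(2)[OF that]] int[OF \<theta>0] d(3)[OF that]
      by (intro norm_set_integral_le_measure[OF W(1) AW, folded m_def]) (auto simp: dist_norm less_imp_le)
    also have "\<dots> < e"
      using e m by (simp add: field_simps)
    finally show ?thesis .
  qed
  then show "\<exists>d>0. \<forall>\<theta>\<in>U. dist \<theta> \<theta>0 < d \<longrightarrow> dist (LINT u:A|W. F \<theta> u) (LINT u:A|W. F \<theta>0 u) < e"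
    using d(1) by blast
qed

lemma norm_linearization_le:
  fixes f :: "'a::real_normed_vector \<Rightarrow> 'b::real_normed_vector"
  assumes f': "\<And>y. y \<in> ball x0 r \<Longrightarrow> (f has_derivative blinfun_apply (f' y)) (at y)"
    and B: "\<And>y. y \<in> ball x0 r \<Longrightarrow> norm (f' y - f' x0) \<le> B" and x: "x \<in> ball x0 r"
  shows "norm (f x - f x0 - f' x0 (x - x0)) \<le> norm (x - x0) * B"
proof (rule differentiable_bound_linearization[where S="ball x0 r" and f'="\<lambda>y. blinfun_apply (f' y)"])
  show "x0 + t *\<^sub>R (x - x0) \<in> ball x0 r" if "t \<in> {0..1}" for t
  proof -
    have "\<bar>t\<bar> * norm (x - x0) \<le> norm (x - x0)"
      using that by (auto intro: mult_left_le_one_le)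
    then show ?thesis
      using x by (simp add: dist_norm norm_minus_commute)
  qed
  show "onorm (blinfun_apply (f' y) - blinfun_apply (f' x0)) \<le> B" if "y \<in> ball x0 r" for y
    using B[OF that] by (simp add: norm_blinfun.rep_eq minus_blinfun.rep_eq fun_diff_def)
qed (use f' x in \<open>auto intro: has_derivative_at_withinI dest: le_less_trans[OF zero_le_dist]\<close>)

lemma has_derivative_set_integral_param:
  fixes F :: "'a::euclidean_space \<Rightarrow> 'u::metric_space \<Rightarrow> 'b::{banach, second_countable_topology}"
    and F' :: "'a \<Rightarrow> 'u \<Rightarrow> 'a \<Rightarrow>\<^sub>L 'b"
  assumes W: "finite_measure W" "sets W = sets borel" and U: "open U" and A: "compact A"
    and c: "continuous_on (U \<times> A) (\<lambda>(\<theta>, u). F \<theta> u)"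
    and c': "continuous_on (U \<times> A) (\<lambda>(\<theta>, u). F' \<theta> u)"
    and F': "\<And>\<theta> u. \<theta> \<in> U \<Longrightarrow> u \<in> A \<Longrightarrow> ((\<lambda>\<theta>. F \<theta> u) has_derivative blinfun_apply (F' \<theta> u)) (at \<theta>)"
    and \<theta>0: "\<theta>0 \<in> U"
    and D: "\<And>h. blinfun_apply D h = (LINT u:A|W. F' \<theta>0 u h)"
  shows "((\<lambda>\<theta>. LINT u:A|W. F \<theta> u) has_derivative blinfun_apply D) (at \<theta>0)"
proof -
  have AW: "A \<in> sets W"
    using A W(2) by (simp add: compact_imp_closed borel_closed)
  have int: "set_integrable W A (F \<theta>)" if "\<theta> \<in> U" for \<theta>
    by (rule set_integrable_continuous_on_compact[OF W A continuous_on_fixed_fst[OF c that]])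
  have int': "set_integrable W A (\<lambda>u. F' \<theta>0 u h)" for h
    by (intro set_integrable_continuous_on_compact[OF W A] bounded_bilinear.continuous_on[OF
          bounded_bilinear_blinfun_apply continuous_on_fixed_fst[OF c' \<theta>0] continuous_on_const])
  define m where "m = measure W A"
  have m: "0 \<le> m"
    by (simp add: m_def)
  show ?thesis
    unfolding has_derivative_at_alt
  proof (intro conjI allI impI blinfun.bounded_linear_right)
    fix e :: real
    assume "0 < e"
    then obtain d where d: "d > 0" "\<And>\<theta>. dist \<theta> \<theta>0 < d \<Longrightarrow> \<theta> \<in> U"
      "\<And>\<theta> u. dist \<theta> \<theta>0 < d \<Longrightarrow> u \<in> A \<Longrightarrow> dist (F' \<theta> u) (F' \<theta>0 u) < e / (m + 1)"
      using uniformly_near_in_param[OF c' U A \<theta>0, of "e / (m + 1)"] m by auto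
    have pointwise: "norm (F \<theta> u - F \<theta>0 u - F' \<theta>0 u (\<theta> - \<theta>0)) \<le> norm (\<theta> - \<theta>0) * (e / (m + 1))"
      if "\<theta> \<in> ball \<theta>0 d" "u \<in> A" for \<theta> u
      using d that by (intro norm_linearization_le[where r=d] F')
        (auto simp: dist_commute dist_norm less_imp_le)
    have "norm ((LINT u:A|W. F \<theta> u) - (LINT u:A|W. F \<theta>0 u) - D (\<theta> - \<theta>0)) \<le> e * norm (\<theta> - \<theta>0)"
      if "norm (\<theta> - \<theta>0) < d" for \<theta>
    proof -
      have \<theta>: "\<theta> \<in> ball \<theta>0 d" "\<theta> \<in> U"
        using that d(2) by (auto simp: dist_norm norm_minus_commute)
      have "(LINT u:A|W. F \<theta> u) - (LINT u:A|W. F \<theta>0 u) - D (\<theta> - \<theta>0)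
          = (LINT u:A|W. F \<theta> u - F \<theta>0 u - F' \<theta>0 u (\<theta> - \<theta>0))"
        using int[OF \<theta>(2)] int[OF \<theta>0] int' by (simp add: D)
      also have "norm \<dots> \<le> norm (\<theta> - \<theta>0) * (e / (m + 1)) * m"
        using int[OF \<theta>(2)] int[OF \<theta>0] int' pointwise[OF \<theta>(1)]
        by (intro norm_set_integral_le_measure[OF W(1) AW, folded m_def]) auto
      also have "\<dots> \<le> e * norm (\<theta> - \<theta>0)"
        using \<open>0 < e\<close> m by (simp add: field_simps mult_left_mono)
      finally show ?thesis .
    qed
    then show "\<exists>d>0. \<forall>\<theta>. norm (\<theta> - \<theta>0) < d \<longrightarrow>
        norm ((LINT u:A|W. F \<theta> u) - (LINT u:A|W. F \<theta>0 u) - D (\<theta> - \<theta>0)) \<le> e * norm (\<theta> - \<theta>0)"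
      using d(1) by blast
  qed
qed

lemma continuous_on_Times_snd_irrelevant:
  "continuous_on U g \<Longrightarrow> continuous_on (U \<times> B) (\<lambda>(\<theta>, v). g \<theta>)"
  using continuous_on_compose2[of U g "U \<times> B" fst] by (auto simp: split_beta continuous_intros)

lemma Ck_param_set_integral:
  fixes F :: "param \<Rightarrow> 'u::metric_space \<Rightarrow> 'b::{banach, second_countable_topology}"
  assumes W: "finite_measure W" "sets W = sets borel" and U: "open U" and A: "compact A"
  shows "Ck_param k U A F \<Longrightarrow> Ck_param k U B (\<lambda>\<theta> _. LINT u:A|W. F \<theta> u)"
proof (induction k arbitrary: F)
  case 0
  show ?case
    using continuous_on_Times_snd_irrelevant[OF continuous_on_set_integral_param[OF W U A
          Ck_param_continuous_on[OF 0]]] by simp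
next
  case (Suc k)
  obtain Fp Fa Fb where
    F: "\<And>\<theta> u. \<theta> \<in> U \<Longrightarrow> u \<in> A \<Longrightarrow> has_partials_at (\<lambda>\<theta>. F \<theta> u) (Fp \<theta> u) (Fa \<theta> u) (Fb \<theta> u) \<theta>"
    and Fk: "Ck_param k U A Fp" "Ck_param k U A Fa" "Ck_param k U A Fb"
    using Ck_param_SucE[OF Suc.prems] by metis
  have c: "continuous_on (U \<times> B) (\<lambda>(\<theta>, v). LINT u:A|W. F \<theta> u)"
    by (intro continuous_on_Times_snd_irrelevant continuous_on_set_integral_param[OF W U A]
        Ck_param_continuous_on[OF Suc.prems])
  have int: "set_integrable W A (G \<theta>)" if "Ck_param k U A G" "\<theta> \<in> U" for G :: "param \<Rightarrow> 'u \<Rightarrow> 'b" and \<theta>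
    using W A continuous_on_fixed_fst[OF Ck_param_continuous_on[OF that(1)] that(2)]
    by (rule set_integrable_continuous_on_compact)
  have "has_partials_at (\<lambda>\<theta>. LINT u:A|W. F \<theta> u)
      (LINT u:A|W. Fp \<theta> u) (LINT u:A|W. Fa \<theta> u) (LINT u:A|W. Fb \<theta> u) \<theta>"
    if \<theta>: "\<theta> \<in> U" for \<theta>
    using int[OF Fk(1) \<theta>] int[OF Fk(2) \<theta>] int[OF Fk(3) \<theta>]
    by (intro has_derivative_set_integral_param[OF W U A Ck_param_continuous_on[OF Suc.prems]
        Ck_param_continuous_on[OF Ck_param_blinfun_of_partials[OF Fk]] F \<theta>]) auto
  then show ?case
    by (intro Ck_param_SucI[OF c _ Suc.IH[OF Fk(1)] Suc.IH[OF Fk(2)] Suc.IH[OF Fk(3)]])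
qed

lemma lipschitz_on_compact_if_continuous_derivative:
  fixes f :: "'a::euclidean_space \<Rightarrow> 'b::real_normed_vector"
  assumes U: "open U" and K: "compact K" "K \<subseteq> U"
    and f': "\<And>x. x \<in> U \<Longrightarrow> (f has_derivative blinfun_apply (f' x)) (at x)"
    and c: "continuous_on U f'"
  obtains C where "C-lipschitz_on K f"
proof -
  have "local_lipschitz {0::real} K (\<lambda>_. f)"
  proof (rule local_lipschitzI)
    fix x assume "x \<in> K"
    then obtain r where r: "r > 0" "cball x r \<subseteq> U"
      using U K(2) open_contains_cball by blast
    obtain B where B: "B > 0" "\<And>y. y \<in> cball x r \<Longrightarrow> norm (f' y) \<le> B"
      using compact_imp_bounded[OF compact_continuous_image[OF continuous_on_subset[OF c r(2)] compact_cball]]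
      by (auto simp: bounded_pos)
    have "B-lipschitz_on (cball x r) f"
    proof (rule bounded_derivative_imp_lipschitz[OF _ convex_cball])
      show "(f has_derivative blinfun_apply (f' y)) (at y within cball x r)" if "y \<in> cball x r" for y
        using f' r(2) that by (blast intro: has_derivative_at_withinI)
      show "onorm (blinfun_apply (f' y)) \<le> B" if "y \<in> cball x r" for y
        using B(2)[OF that] by (simp add: norm_blinfun.rep_eq)
    qed (use B in simp)
    then show "\<exists>u>0. \<exists>L. \<forall>t\<in>cball t u \<inter> {0}. L-lipschitz_on (cball x u \<inter> K) f" for t :: real
      using r(1) lipschitz_on_subset[of B "cball x r" f "cball x r \<inter> K"] by blast
  qed
  then show thesis
    using local_lipschitz_compact_implies_lipschitz[OF _ K(1) compact_sing[of "0::real"]] that by auto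
qed

lemma Ck_param_3_imp_lipschitz_hessian:
  fixes g :: "param \<Rightarrow> 'b::real_normed_vector"
  assumes g: "Ck_param 3 U B (\<lambda>\<theta> _. g \<theta>)" and b: "b \<in> B" and U: "open U" and K: "compact K" "K \<subseteq> U"
  shows "(\<exists>C. C-lipschitz_on K g)
    \<and> (\<exists>(DS :: param \<Rightarrow> param \<Rightarrow>\<^sub>L 'b) (HS :: param \<Rightarrow> param \<Rightarrow>\<^sub>L (param \<Rightarrow>\<^sub>L 'b)).
        (\<forall>\<theta> \<in> U. (g has_derivative blinfun_apply (DS \<theta>)) (at \<theta>) \<and> (DS has_derivative blinfun_apply (HS \<theta>)) (at \<theta>))
        \<and> (\<exists>C. C-lipschitz_on K HS))"
proof -
  have g: "Ck_param (Suc (Suc (Suc 0))) U B (\<lambda>\<theta> _. g \<theta>)"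
    using g unfolding numeral_3_eq_3 .
  obtain G1 where G1: "\<And>\<theta> u. \<theta> \<in> U \<Longrightarrow> u \<in> B \<Longrightarrow> (g has_derivative blinfun_apply (G1 \<theta> u)) (at \<theta>)"
    and C2: "Ck_param (Suc (Suc 0)) U B G1"
    using Ck_param_SucE_derivative[OF g] by metis
  obtain G2 where G2: "\<And>\<theta> u. \<theta> \<in> U \<Longrightarrow> u \<in> B \<Longrightarrow> ((\<lambda>\<theta>. G1 \<theta> u) has_derivative blinfun_apply (G2 \<theta> u)) (at \<theta>)"
    and C1: "Ck_param (Suc 0) U B G2"
    using Ck_param_SucE_derivative[OF C2] by metis
  obtain G3 where G3: "\<And>\<theta> u. \<theta> \<in> U \<Longrightarrow> u \<in> B \<Longrightarrow> ((\<lambda>\<theta>. G2 \<theta> u) has_derivative blinfun_apply (G3 \<theta> u)) (at \<theta>)"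
    and C0: "Ck_param 0 U B G3"
    using Ck_param_SucE_derivative[OF C1] by metis
  obtain C where "C-lipschitz_on K g"
    using lipschitz_on_compact_if_continuous_derivative[OF U K G1[OF _ b]
        continuous_on_fixed_snd[OF Ck_param_continuous_on[OF C2] b]] .
  moreover obtain C' where "C'-lipschitz_on K (\<lambda>\<theta>. G2 \<theta> b)"
    using lipschitz_on_compact_if_continuous_derivative[OF U K G3[OF _ b]
        continuous_on_fixed_snd[OF Ck_param_continuous_on[OF C0] b]] .
  moreover have "\<forall>\<theta> \<in> U. (g has_derivative blinfun_apply (G1 \<theta> b)) (at \<theta>)
      \<and> ((\<lambda>\<theta>. G1 \<theta> b) has_derivative blinfun_apply (G2 \<theta> b)) (at \<theta>)"
    using G1 G2 b by blast
  ultimately show ?thesis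
    by (intro conjI) (blast, intro exI[of _ "\<lambda>\<theta>. G1 \<theta> b"] exI[of _ "\<lambda>\<theta>. G2 \<theta> b"], blast)
qed

section \<open>The mixing factor M\<close>

lemma norm_M_ge: "\<bar>1 - fst \<theta>\<bar> - \<bar>fst \<theta>\<bar> \<le> cmod (M \<theta> v)"
proof -
  obtain p a b where \<theta>: "\<theta> = (p, a, b)" by (cases \<theta>)
  have n1: "norm (of_real p * exp (\<i> * of_real (v * a))) = \<bar>p\<bar>"
    by (simp add: norm_mult norm_exp_i_times)
  have n2: "norm (of_real (1 - p) * exp (\<i> * of_real (v * b))) = \<bar>1 - p\<bar>"
    by (simp only: norm_mult norm_exp_i_times norm_of_real) simp
  have "norm (of_real (1 - p) * exp (\<i> * of_real (v * b))) - norm (of_real p * exp (\<i> * of_real (v * a)))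
      \<le> norm (of_real p * exp (\<i> * of_real (v * a)) + of_real (1 - p) * exp (\<i> * of_real (v * b)))"
    by (metis add.commute norm_diff_ineq)
  then show ?thesis
    unfolding n1 n2 by (simp add: \<theta> M_def)
qed

lemma M_nonzero: "fst \<theta> < 1/2 \<Longrightarrow> M \<theta> v \<noteq> 0"
  using norm_M_ge[of \<theta> v] by auto

lemma norm_iexp_diff_le: "cmod (iexp x - iexp y) \<le> \<bar>x - y\<bar>"
proof -
  have "iexp x - iexp y = iexp y * (iexp (x - y) - 1)"
    by (simp add: algebra_simps exp_diff[symmetric] exp_add[symmetric])
  then have "cmod (iexp x - iexp y) = cmod (iexp (x - y) - 1)"
    by (simp add: norm_mult norm_exp_i_times)
  also have "\<dots> \<le> \<bar>x - y\<bar>"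
    using iexp_approx1[of "x - y" 0] by simp
  finally show ?thesis .
qed

lemma norm_M_diff_le:
  assumes "0 \<le> fst \<theta>'" "fst \<theta>' \<le> 1"
  shows "cmod (M \<theta> v - M \<theta>' v) \<le> (2 + \<bar>v\<bar>) * norm (\<theta> - \<theta>')"
proof -
  obtain p a b where \<theta>: "\<theta> = (p, a, b)" by (cases \<theta>)
  obtain p' a' b' where \<theta>': "\<theta>' = (p', a', b')" by (cases \<theta>')
  have p': "0 \<le> p'" "p' \<le> 1"
    using assms \<theta>' by auto
  have components: "\<bar>p - p'\<bar> \<le> norm (\<theta> - \<theta>')" "\<bar>a - a'\<bar> \<le> norm (\<theta> - \<theta>')" "\<bar>b - b'\<bar> \<le> norm (\<theta> - \<theta>')"
    using norm_triple_components_le[of "\<theta> - \<theta>'"] by (simp_all add: \<theta> \<theta>')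
  have "M \<theta> v - M \<theta>' v = of_real (p - p') * (iexp (v * a) - iexp (v * b))
      + of_real p' * (iexp (v * a) - iexp (v * a')) + of_real (1 - p') * (iexp (v * b) - iexp (v * b'))"
    by (simp add: \<theta> \<theta>' M_def algebra_simps)
  also have "cmod \<dots> \<le> \<bar>p - p'\<bar> * 2 + p' * (\<bar>v\<bar> * \<bar>a - a'\<bar>) + (1 - p') * (\<bar>v\<bar> * \<bar>b - b'\<bar>)"
  proof (intro order_trans[OF norm_triangle_ineq] add_mono)
    show "cmod (of_real (p - p') * (iexp (v * a) - iexp (v * b))) \<le> \<bar>p - p'\<bar> * 2"
      using norm_triangle_ineq4[of "iexp (v * a)" "iexp (v * b)"]
      by (simp add: norm_mult norm_exp_i_times mult_left_mono flip: of_real_diff)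
    show "cmod (of_real p' * (iexp (v * a) - iexp (v * a'))) \<le> p' * (\<bar>v\<bar> * \<bar>a - a'\<bar>)"
      using norm_iexp_diff_le[of "v * a" "v * a'"] p'
      by (simp add: norm_mult mult_left_mono abs_mult flip: right_diff_distrib)
    show "cmod (of_real (1 - p') * (iexp (v * b) - iexp (v * b'))) \<le> (1 - p') * (\<bar>v\<bar> * \<bar>b - b'\<bar>)"
      using norm_iexp_diff_le[of "v * b" "v * b'"] p'
      by (simp add: norm_mult mult_left_mono abs_mult flip: right_diff_distrib of_real_diff)
  qed
  also have "\<dots> \<le> norm (\<theta> - \<theta>') * 2 + p' * (\<bar>v\<bar> * norm (\<theta> - \<theta>')) + (1 - p') * (\<bar>v\<bar> * norm (\<theta> - \<theta>'))"
    using components p' by (intro add_mono mult_left_mono mult_right_mono) auto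
  also have "\<dots> = (2 + \<bar>v\<bar>) * norm (\<theta> - \<theta>')"
    by (simp add: algebra_simps)
  finally show ?thesis .
qed

lemma Ck_param_M: "continuous_on A s \<Longrightarrow> Ck_param k U A (\<lambda>\<theta> u. M \<theta> (s u))"
proof -
  assume s: "continuous_on A s"
  have "M \<theta> v = of_real (fst \<theta>) * exp ((\<i> * of_real v) * of_real (fst (snd \<theta>)))
      + (1 - of_real (fst \<theta>)) * exp ((\<i> * of_real v) * of_real (snd (snd \<theta>)))" for \<theta> v
    by (cases \<theta>) (simp add: M_def algebra_simps)
  moreover have "Ck_param k U A (\<lambda>\<theta> u. of_real (fst \<theta>) * exp ((\<i> * of_real (s u)) * of_real (fst (snd \<theta>)))
      + (1 - of_real (fst \<theta>)) * exp ((\<i> * of_real (s u)) * of_real (snd (snd \<theta>))))"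
    by (intro Ck_param_add Ck_param_mult Ck_param_exp Ck_param_diff Ck_param_of_real_coordinates
        Ck_param_const continuous_intros s)
  ultimately show ?thesis by simp
qed

lemma Ck_param_Zk: "Ck_param k {\<theta>. fst \<theta> < 1/2} A (\<lambda>\<theta> u. Zk x \<theta> u)"
proof -
  let ?U = "{\<theta>::param. fst \<theta> < 1/2}"
  have inverse_M: "Ck_param k ?U A (\<lambda>\<theta> u. inverse (M \<theta> (s u)))" if "continuous_on A s" for s
  proof (rule Ck_param_inverse)
    show "Ck_param k ?U A (\<lambda>\<theta> u. M \<theta> (s u))"
      using that by (rule Ck_param_M)
  qed (simp add: M_nonzero)
  have "continuous_on A (\<lambda>u. exp (\<i> * of_real (u * x)))" "continuous_on A (\<lambda>u. exp (- \<i> * of_real (u * x)))"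
    by (intro continuous_intros)+
  from Ck_param_diff[OF Ck_param_mult[OF Ck_param_const[OF this(1)] inverse_M[OF continuous_on_id]]
      Ck_param_mult[OF Ck_param_const[OF this(2)] inverse_M[OF continuous_on_minus[OF continuous_on_id]]]]
  show ?thesis
    unfolding Zk_def divide_inverse .
qed

section \<open>Lipschitz continuity of S\<close>

lemma norm_fourier_le: "cmod (fourier g u) \<le> (LINT x|lborel. \<bar>g x\<bar>)"
proof -
  have "cmod (fourier g u) \<le> (LINT x|lborel. cmod (exp (\<i> * of_real (x * u)) * of_real (g x)))"
    unfolding fourier_def by (rule integral_norm_bound)
  then show ?thesis
    by (simp add: norm_mult norm_exp_i_times)
qed

lemma borel_measurable_fourier:
  assumes g[measurable]: "g \<in> borel_measurable borel"
  shows "fourier g \<in> borel_measurable borel"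
proof -
  have [measurable]: "(\<lambda>x. g (snd x)) \<in> borel_measurable (borel \<Otimes>\<^sub>M borel)"
    by (rule measurable_compose[OF measurable_snd g])
  have "(\<lambda>u. LINT x|lborel. exp (\<i> * of_real (x * u)) * of_real (g x)) \<in> borel_measurable borel"
    by (intro lborel.borel_measurable_lebesgue_integral) measurable
  then show ?thesis
    unfolding fourier_def[abs_def] .
qed

lemma borel_measurable_J:
  assumes [measurable]: "f \<in> borel_measurable borel"
  shows "J f \<theta>0 \<theta> \<in> borel_measurable borel"
proof -
  have "mixdens f \<theta>0 \<in> borel_measurable borel"
    unfolding mixdens_def by (cases \<theta>0) (simp, measurable)
  then have [measurable]: "fourier (mixdens f \<theta>0) \<in> borel_measurable borel"
    by (rule borel_measurable_fourier)
  have [measurable]: "M \<theta> \<in> borel_measurable borel"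
    by (rule borel_measurable_continuous_onI) (simp add: M_def split_beta continuous_intros)
  show ?thesis
    unfolding J_def[abs_def] by measurable
qed

lemma norm_divide_diff_le:
  fixes x m m' :: "'a::real_normed_field"
  assumes "0 < d" "d \<le> norm m" "d \<le> norm m'"
  shows "norm (x / m - x / m') \<le> norm x * norm (m - m') / d\<^sup>2"
proof -
  have "m \<noteq> 0" "m' \<noteq> 0"
    using assms by auto
  then have "norm (x / m - x / m') = norm x * norm (m - m') / (norm m * norm m')"
    by (simp add: field_simps norm_mult norm_divide norm_minus_commute flip: norm_mult)
  also have "\<dots> \<le> norm x * norm (m - m') / (d * d)"
    using assms by (intro divide_left_mono mult_mono) (auto intro!: mult_pos_pos)
  finally show ?thesis
    by (simp add: power2_eq_square)
qed

lemma norm_J_le: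
  assumes "0 \<le> fst \<theta>" "fst \<theta> \<le> q" "q < 1/2" and K: "\<And>v. cmod (fourier (mixdens f \<theta>0) v) \<le> K"
  shows "cmod (J f \<theta>0 \<theta> u) \<le> 2 * K / (1 - 2 * q)"
proof -
  have "0 \<le> K"
    using K[of 0] by (rule order_trans[OF norm_ge_zero])
  have "cmod (fourier (mixdens f \<theta>0) v / M \<theta> v) \<le> K / (1 - 2 * q)" for v
    unfolding norm_divide using K[of v] \<open>0 \<le> K\<close> norm_M_ge[of \<theta> v] assms
    by (intro frac_le) (auto simp: abs_of_nonneg)
  then have "cmod (J f \<theta>0 \<theta> u) \<le> K / (1 - 2 * q) + K / (1 - 2 * q)"
    unfolding J_def by (intro order_trans[OF norm_triangle_ineq4 add_mono])
  then show ?thesis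
    by simp
qed

lemma norm_J_diff_le:
  assumes "0 \<le> fst \<theta>" "fst \<theta> \<le> q" "0 \<le> fst \<theta>'" "fst \<theta>' \<le> q" "q < 1/2"
    and K: "\<And>v. cmod (fourier (mixdens f \<theta>0) v) \<le> K"
  shows "cmod (J f \<theta>0 \<theta> u - J f \<theta>0 \<theta>' u) \<le> 2 * K * (2 + \<bar>u\<bar>) * norm (\<theta> - \<theta>') / (1 - 2 * q)\<^sup>2"
proof -
  let ?\<phi> = "fourier (mixdens f \<theta>0)"
  have "0 \<le> K"
    using K[of 0] by (rule order_trans[OF norm_ge_zero])
  have lower: "1 - 2 * q \<le> cmod (M \<eta> v)" if "0 \<le> fst \<eta>" "fst \<eta> \<le> q" for \<eta> v
    using norm_M_ge[of \<eta> v] that by (auto simp: abs_of_nonneg)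
  have one: "cmod (?\<phi> v / M \<theta> v - ?\<phi> v / M \<theta>' v) \<le> K * (2 + \<bar>u\<bar>) * norm (\<theta> - \<theta>') / (1 - 2 * q)\<^sup>2"
    if "\<bar>v\<bar> = \<bar>u\<bar>" for v
  proof -
    have "cmod (?\<phi> v / M \<theta> v - ?\<phi> v / M \<theta>' v) \<le> cmod (?\<phi> v) * cmod (M \<theta> v - M \<theta>' v) / (1 - 2 * q)\<^sup>2"
      using assms by (intro norm_divide_diff_le lower) auto
    also have "\<dots> \<le> K * ((2 + \<bar>u\<bar>) * norm (\<theta> - \<theta>')) / (1 - 2 * q)\<^sup>2"
      using assms K[of v] \<open>0 \<le> K\<close> norm_M_diff_le[of \<theta>' \<theta> v] that
      by (intro divide_right_mono mult_mono) auto
    finally show ?thesis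
      by simp
  qed
  have "cmod (J f \<theta>0 \<theta> u - J f \<theta>0 \<theta>' u)
      \<le> cmod (?\<phi> u / M \<theta> u - ?\<phi> u / M \<theta>' u) + cmod (?\<phi> (- u) / M \<theta> (- u) - ?\<phi> (- u) / M \<theta>' (- u))"
    unfolding J_def by (rule order_trans[OF _ norm_triangle_ineq4]) (simp add: algebra_simps)
  also have "\<dots> \<le> 2 * K * (2 + \<bar>u\<bar>) * norm (\<theta> - \<theta>') / (1 - 2 * q)\<^sup>2"
    using one[of u] one[of "- u"] by simp
  finally show ?thesis .
qed

lemma norm_J_square_diff_le:
  assumes "0 \<le> fst \<theta>" "fst \<theta> \<le> q" "0 \<le> fst \<theta>'" "fst \<theta>' \<le> q" "q < 1/2"
    and K: "\<And>v. cmod (fourier (mixdens f \<theta>0) v) \<le> K"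
  shows "cmod ((J f \<theta>0 \<theta> u)\<^sup>2 - (J f \<theta>0 \<theta>' u)\<^sup>2) \<le> 8 * K\<^sup>2 / (1 - 2 * q) ^ 3 * norm (\<theta> - \<theta>') * (2 + \<bar>u\<bar>)"
proof -
  define \<delta> where "\<delta> = 1 - 2 * q"
  have "0 < \<delta>" "0 \<le> K"
    using assms(5) K[of 0] by (auto simp: \<delta>_def intro: order_trans[OF norm_ge_zero])
  have "(J f \<theta>0 \<theta> u)\<^sup>2 - (J f \<theta>0 \<theta>' u)\<^sup>2 = (J f \<theta>0 \<theta> u - J f \<theta>0 \<theta>' u) * (J f \<theta>0 \<theta> u + J f \<theta>0 \<theta>' u)"
    by (simp add: power2_eq_square algebra_simps)
  then have "cmod ((J f \<theta>0 \<theta> u)\<^sup>2 - (J f \<theta>0 \<theta>' u)\<^sup>2)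
      = cmod (J f \<theta>0 \<theta> u - J f \<theta>0 \<theta>' u) * cmod (J f \<theta>0 \<theta> u + J f \<theta>0 \<theta>' u)"
    by (simp add: norm_mult)
  also have "\<dots> \<le> (2 * K * (2 + \<bar>u\<bar>) * norm (\<theta> - \<theta>') / \<delta>\<^sup>2) * (2 * K / \<delta> + 2 * K / \<delta>)"
    unfolding \<delta>_def using assms \<open>0 \<le> K\<close>
    by (intro mult_mono order_trans[OF norm_triangle_ineq add_mono] norm_J_diff_le norm_J_le) auto
  also have "\<dots> = 8 * K\<^sup>2 / \<delta> ^ 3 * norm (\<theta> - \<theta>') * (2 + \<bar>u\<bar>)"
    using \<open>0 < \<delta>\<close> by (simp add: field_simps power2_eq_square power3_eq_cube)
  finally show ?thesis
    by (simp add: \<delta>_def)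
qed

lemma lipschitz_on_integral:
  fixes F :: "'a::metric_space \<Rightarrow> 'u \<Rightarrow> 'b::{banach, second_countable_topology}"
  assumes P: "integrable W P" "\<And>u. 0 \<le> P u" and L: "0 \<le> L"
    and F: "\<And>\<theta>. \<theta> \<in> K \<Longrightarrow> integrable W (F \<theta>)"
    and bound: "\<And>\<theta> \<theta>' u. \<theta> \<in> K \<Longrightarrow> \<theta>' \<in> K \<Longrightarrow> norm (F \<theta> u - F \<theta>' u) \<le> L * dist \<theta> \<theta>' * P u"
  shows "(L * integral\<^sup>L W P)-lipschitz_on K (\<lambda>\<theta>. integral\<^sup>L W (F \<theta>))"
proof (rule lipschitz_onI)
  fix \<theta> \<theta>' assume \<theta>: "\<theta> \<in> K" "\<theta>' \<in> K"
  have "dist (integral\<^sup>L W (F \<theta>)) (integral\<^sup>L W (F \<theta>')) = norm (LINT u|W. F \<theta> u - F \<theta>' u)"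
    using F[OF \<theta>(1)] F[OF \<theta>(2)] by (simp add: dist_norm)
  also have "\<dots> \<le> (LINT u|W. norm (F \<theta> u - F \<theta>' u))"
    by (rule integral_norm_bound)
  also have "\<dots> \<le> (LINT u|W. L * dist \<theta> \<theta>' * P u)"
    using F[OF \<theta>(1)] F[OF \<theta>(2)] P(1) bound[OF \<theta>] by (intro integral_mono) auto
  also have "\<dots> = L * integral\<^sup>L W P * dist \<theta> \<theta>'"
    by (simp add: algebra_simps)
  finally show "dist (integral\<^sup>L W (F \<theta>)) (integral\<^sup>L W (F \<theta>')) \<le> L * integral\<^sup>L W P * dist \<theta> \<theta>'" .
qed (use P L in \<open>simp add: integral_nonneg\<close>)

lemma continuous_on_compact_less_bound:
  fixes g :: "'a::topological_space \<Rightarrow> real"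
  assumes "compact K" "continuous_on K g" "\<And>x. x \<in> K \<Longrightarrow> g x < c"
  obtains q where "q < c" "\<And>x. x \<in> K \<Longrightarrow> g x \<le> q"
proof (cases "K = {}")
  case True
  then show thesis
    using that[of "c - 1"] by simp
next
  case False
  then obtain x where "x \<in> K" "\<And>y. y \<in> K \<Longrightarrow> g y \<le> g x"
    using continuous_attains_sup[OF assms(1) _ assms(2)] by blast
  then show thesis
    using that[of "g x"] assms(3) by blast
qed

lemma lipschitz_on_S:
  assumes \<Theta>: "compact \<Theta>" "\<Theta> \<subseteq> {\<theta>. 0 < fst \<theta> \<and> fst \<theta> < 1/2}"
    and W: "finite_measure W" "sets W = sets borel"
    and P: "integrable W (\<lambda>u. 1 + \<bar>u\<bar> + u\<^sup>2 + \<bar>u\<bar> ^ 3)" and f: "f \<in> borel_measurable borel"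
  shows "\<exists>C. C-lipschitz_on \<Theta> (S W f \<theta>0)"
proof -
  obtain q where q: "q < 1/2" "\<And>\<theta>. \<theta> \<in> \<Theta> \<Longrightarrow> fst \<theta> \<le> q"
    using continuous_on_compact_less_bound[OF \<Theta>(1) continuous_on_fst[OF continuous_on_id], of "1/2"] \<Theta>(2)
    by auto
  have fst_\<Theta>: "0 \<le> fst \<theta>" "fst \<theta> \<le> q" if "\<theta> \<in> \<Theta>" for \<theta>
    using that \<Theta>(2) q(2) by auto
  define K where "K = (LINT x|lborel. \<bar>mixdens f \<theta>0 x\<bar>)"
  have K: "cmod (fourier (mixdens f \<theta>0) v) \<le> K" for v
    unfolding K_def by (rule norm_fourier_le)
  have "0 \<le> K"
    unfolding K_def by (rule Bochner_Integration.integral_nonneg) simp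
  define \<delta> where "\<delta> = 1 - 2 * q"
  have "0 < \<delta>"
    using q(1) by (simp add: \<delta>_def)
  define C0 where "C0 = 4 * K\<^sup>2 / \<delta> ^ 3"
  have "0 \<le> C0"
    using \<open>0 < \<delta>\<close> by (simp add: C0_def)
  define G where "G \<theta> u = - (1/4) * (J f \<theta>0 \<theta> u)\<^sup>2" for \<theta> u
  have bound: "cmod (G \<theta> u - G \<theta>' u) \<le> C0 * dist \<theta> \<theta>' * (1 + \<bar>u\<bar> + u\<^sup>2 + \<bar>u\<bar> ^ 3)"
    if \<theta>: "\<theta> \<in> \<Theta>" "\<theta>' \<in> \<Theta>" for \<theta> \<theta>' u
  proof -
    have G: "G \<theta> u - G \<theta>' u = - ((J f \<theta>0 \<theta> u)\<^sup>2 - (J f \<theta>0 \<theta>' u)\<^sup>2) / 4"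
      by (simp add: G_def algebra_simps)
    have "cmod (G \<theta> u - G \<theta>' u) = cmod ((J f \<theta>0 \<theta> u)\<^sup>2 - (J f \<theta>0 \<theta>' u)\<^sup>2) / 4"
      unfolding G norm_divide norm_minus_cancel by simp
    also have "\<dots> \<le> 8 * K\<^sup>2 / \<delta> ^ 3 * norm (\<theta> - \<theta>') * (2 + \<bar>u\<bar>) / 4"
      using norm_J_square_diff_le[OF fst_\<Theta>[OF \<theta>(1)] fst_\<Theta>[OF \<theta>(2)] q(1) K, of u]
      by (simp add: \<delta>_def ac_simps)
    also have "\<dots> = C0 * norm (\<theta> - \<theta>') * ((2 + \<bar>u\<bar>) / 2)"
      by (simp add: C0_def)
    also have "\<dots> \<le> C0 * dist \<theta> \<theta>' * (1 + \<bar>u\<bar> + u\<^sup>2 + \<bar>u\<bar> ^ 3)"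
      unfolding dist_norm using \<open>0 \<le> C0\<close> by (intro mult_left_mono) auto
    finally show ?thesis .
  qed
  have integrable: "integrable W (G \<theta>)" if "\<theta> \<in> \<Theta>" for \<theta>
  proof (rule finite_measure.integrable_const_bound[OF W(1)])
    show "AE u in W. cmod (G \<theta> u) \<le> (2 * K / \<delta>)\<^sup>2 / 4"
      unfolding G_def \<delta>_def using norm_J_le[OF fst_\<Theta>[OF that] q(1) K]
      by (intro AE_I2) (simp add: norm_mult norm_power power_mono divide_right_mono)
    have [measurable]: "J f \<theta>0 \<theta> \<in> borel_measurable borel"
      using f by (rule borel_measurable_J)
    have "G \<theta> \<in> borel_measurable borel"
      unfolding G_def by measurable
    then show "G \<theta> \<in> borel_measurable W"
      by (simp add: measurable_cong_sets[OF W(2) refl])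
  qed
  have "S W f \<theta>0 = (\<lambda>\<theta>. integral\<^sup>L W (G \<theta>))"
    by (simp add: fun_eq_iff S_def G_def[abs_def])
  then show ?thesis
    using lipschitz_on_integral[OF P _ \<open>0 \<le> C0\<close> integrable bound] by auto
qed

section \<open>Smoothness of S_n\<close>

lemma Ck_param_Sn:
  assumes W: "finite_measure W" "sets W = sets borel"
  shows "Ck_param k {\<theta>. fst \<theta> < 1/2} B (\<lambda>\<theta> _. Sn W X n h \<theta>)"
proof -
  define A where "A = {u::real. \<bar>u\<bar> \<le> 1 / h}"
  have "A = {- (1/h)..1/h}"
    by (auto simp: A_def abs_le_iff)
  then have A: "compact A"
    by simp
  have U: "open {\<theta>::param. fst \<theta> < 1/2}"
    by (intro open_Collect_less continuous_intros)
  define P where "P = {(j, k). j \<in> {1..n} \<and> k \<in> {1..n} \<and> j \<noteq> k}"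
  have "finite P"
    by (rule finite_subset[of _ "{1..n} \<times> {1..n}"]) (auto simp: P_def)
  then have "Ck_param k {\<theta>. fst \<theta> < 1/2} B (\<lambda>\<theta> _. of_real (- 1 / (4 * real n * (real n - 1))) *
      (\<Sum>i \<in> P. LINT u:A|W. Zk (X (snd i)) \<theta> u * Zk (X (fst i)) \<theta> u))"
    by (intro Ck_param_cmult Ck_param_sum Ck_param_set_integral[OF W U A] Ck_param_mult Ck_param_Zk)
  then show ?thesis
    by (simp add: Sn_def A_def P_def split_beta)
qed

theorem lemma3:
  fixes \<Theta> :: "param set" and W :: "real measure" and f :: "real \<Rightarrow> real"
    and p0 a0 b0 h :: real and X :: "nat \<Rightarrow> real" and n :: nat
  assumes "compact \<Theta>"
    and "\<Theta> \<subseteq> {(p, a, b). 0 < p \<and> p < 1/2 \<and> a \<noteq> b}"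
    and "prob_space W" and "sets W = sets borel"
    and "absolutely_continuous lborel W"
    and "integrable W (\<lambda>u. 1 + \<bar>u\<bar> + u^2 + \<bar>u\<bar>^3)"
    and "f \<in> borel_measurable borel" and "\<And>x. 0 \<le> f x"
    and "(\<integral>\<^sup>+ x. ennreal (f x) \<partial>lborel) = 1"
    and "(p0, a0, b0) \<in> \<Theta>"
    and "n \<ge> 2" and "h > 0"
  shows "(\<exists>C. C-lipschitz_on \<Theta> (S W f (p0, a0, b0)))
       \<and> (\<exists>C. C-lipschitz_on \<Theta> (Sn W X n h))
       \<and> (\<exists>(DS :: param \<Rightarrow> param \<Rightarrow>\<^sub>L complex) (HS :: param \<Rightarrow> param \<Rightarrow>\<^sub>L (param \<Rightarrow>\<^sub>L complex)).
            (\<forall>\<theta> \<in> {(p, a, b). 0 < p \<and> p < 1/2 \<and> a \<noteq> b}.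
               (Sn W X n h has_derivative blinfun_apply (DS \<theta>)) (at \<theta>) \<and>
               (DS has_derivative blinfun_apply (HS \<theta>)) (at \<theta>)) \<and>
            (\<exists>C. C-lipschitz_on \<Theta> HS))"
proof -
  have W: "finite_measure W" "sets W = sets borel"
    using assms(3,4) by (auto intro: prob_space.finite_measure)
  have \<Theta>: "\<Theta> \<subseteq> {\<theta>. 0 < fst \<theta> \<and> fst \<theta> < 1/2}" "\<Theta> \<subseteq> {\<theta>. fst \<theta> < 1/2}"
    using assms(2) by auto
  have U: "open {\<theta>::param. fst \<theta> < 1/2}"
    by (intro open_Collect_less continuous_intros)
  obtain DS HS where D: "\<forall>\<theta> \<in> {\<theta>. fst \<theta> < 1/2}. (Sn W X n h has_derivative blinfun_apply (DS \<theta>)) (at \<theta>)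
        \<and> (DS has_derivative blinfun_apply (HS \<theta>)) (at \<theta>)"
    and "\<exists>C. C-lipschitz_on \<Theta> HS" "\<exists>C. C-lipschitz_on \<Theta> (Sn W X n h)"
    using Ck_param_3_imp_lipschitz_hessian[OF Ck_param_Sn[OF W] UNIV_I U assms(1) \<Theta>(2)] by blast
  moreover have "\<exists>C. C-lipschitz_on \<Theta> (S W f (p0, a0, b0))"
    by (rule lipschitz_on_S[OF assms(1) \<Theta>(1) W assms(6,7)])
  ultimately show ?thesis
    by (intro conjI exI[of _ DS] exI[of _ HS]) auto
qed

end
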